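(* Let $K$ be any real number field and let $a',b'$ be arbitrary nonzero elements of $K$. Then there exist a generator $g'$ of $K$ (i.e. $\mathbb{Q}(g')=K$) and $x,y,z\in K$ such that $$a'x^2 + b'y^2 - a'b'z^2 = g'.$$
   Context: A real number field is a field $K\subset\mathbb{R}$ with $[K:\mathbb{Q}]<\infty$. *)

theory Defs
  imports Complex_Main
begin

definition subfield_of_real :: "real set \<Rightarrow> bool" where
  "subfield_of_real K \<longleftrightarrow>
     0 \<in> K \<and> 1 \<in> K \<and>
     (\<forall>x\<in>K. \<forall>y\<in>K. x + y \<in> K \<and> x * y \<in> K) \<and>
     (\<forall>x\<in>K. - x \<in> K) \<and>
     (\<forall>x\<in>K. x \<noteq> 0 \<longrightarrow> inverse x \<in> K)"

definition finite_over_rat :: "real set \<Rightarrow> bool" where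
  "finite_over_rat K \<longleftrightarrow>
     (\<exists>B. finite B \<and> B \<subseteq> K \<and>
          K = {\<Sum>b\<in>B. of_rat (c b) * b | c :: real \<Rightarrow> rat. True})"

definition real_number_field :: "real set \<Rightarrow> bool" where
  "real_number_field K \<longleftrightarrow> subfield_of_real K \<and> finite_over_rat K"

definition generated_subfield :: "real \<Rightarrow> real set" where
  "generated_subfield g = \<Inter>{F. subfield_of_real F \<and> g \<in> F}"

end

(*
  Take y = z = 0: it suffices to find \<theta> \<in> K with \<rat>(\<theta>\<^sup>2/a') = K, and then x = \<theta>/a'.
  Let \<delta> be a primitive element of K and f, h nonzero rational polynomials with f(a') = 0 and
  h(\<delta>) = 0. For rational r put \<theta> = \<delta> + r and F = \<rat>(\<theta>\<^sup>2/a'). Then \<theta> is a common complex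
  root of h(X - r) and f(a' X\<^sup>2/\<theta>\<^sup>2), two polynomials with coefficients in F, and for all but
  finitely many r it is their only common root. A unique common root of two polynomials over a
  field F lies in F: Euclid's algorithm, run inside F, produces a polynomial over F whose only
  root is \<theta>, i.e. c (X - \<theta>)\<^sup>m, and \<theta> is a quotient of its two top coefficients.
  Hence \<delta> = \<theta> - r \<in> F and F = K. The same device, applied to h(X) and f(\<gamma> - r X) with
  \<gamma> = \<alpha> + r \<beta>, gives the primitive element theorem.
*)

theory Submission
  imports Defs "HOL-Computational_Algebra.Fundamental_Theorem_Algebra"
begin

section \<open>Subfields\<close>

definition subfield :: "'a::field set \<Rightarrow> bool" where
  "subfield S \<longleftrightarrow>
     0 \<in> S \<and> 1 \<in> S \<and>
     (\<forall>x\<in>S. \<forall>y\<in>S. x + y \<in> S \<and> x * y \<in> S) \<and>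
     (\<forall>x\<in>S. - x \<in> S) \<and>
     (\<forall>x\<in>S. x \<noteq> 0 \<longrightarrow> inverse x \<in> S)"

lemma subfield_of_real_iff: "subfield_of_real K \<longleftrightarrow> subfield K"
  by (simp add: subfield_of_real_def subfield_def)

context
  fixes S :: "'a::field set"
  assumes S: "subfield S"
begin

lemma subfield_zero: "0 \<in> S"
  and subfield_one: "1 \<in> S"
  and subfield_add: "x \<in> S \<Longrightarrow> y \<in> S \<Longrightarrow> x + y \<in> S"
  and subfield_mult: "x \<in> S \<Longrightarrow> y \<in> S \<Longrightarrow> x * y \<in> S"
  and subfield_uminus: "x \<in> S \<Longrightarrow> - x \<in> S"
  using S by (simp_all add: subfield_def)

lemma subfield_inverse: "x \<in> S \<Longrightarrow> inverse x \<in> S"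
  using S by (cases "x = 0") (auto simp: subfield_def)

lemma subfield_diff: "x \<in> S \<Longrightarrow> y \<in> S \<Longrightarrow> x - y \<in> S"
  using subfield_add[of x "- y"] subfield_uminus by simp

lemma subfield_divide: "x \<in> S \<Longrightarrow> y \<in> S \<Longrightarrow> x / y \<in> S"
  using subfield_mult[of x "inverse y"] subfield_inverse by (simp add: divide_inverse)

lemma subfield_power: "x \<in> S \<Longrightarrow> x ^ n \<in> S"
  by (induction n) (auto intro: subfield_mult subfield_one)

lemma subfield_sum: "(\<And>x. x \<in> A \<Longrightarrow> f x \<in> S) \<Longrightarrow> sum f A \<in> S"
  by (induction A rule: infinite_finite_induct) (auto intro: subfield_add subfield_zero)

lemma subfield_of_nat: "of_nat n \<in> S"
  by (induction n) (auto intro: subfield_add subfield_zero subfield_one)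

lemma subfield_of_int: "of_int n \<in> S"
  by (cases n rule: int_cases2) (auto intro: subfield_uminus subfield_of_nat)

lemma coeff_mult_subfield:
  "(\<And>i. coeff p i \<in> S) \<Longrightarrow> (\<And>i. coeff q i \<in> S) \<Longrightarrow> coeff (p * q) i \<in> S"
  by (rule coeff_mult_semiring_closed) (auto intro: subfield_zero subfield_add subfield_mult)

lemma coeff_pcompose_subfield:
  "(\<And>i. coeff p i \<in> S) \<Longrightarrow> (\<And>i. coeff q i \<in> S) \<Longrightarrow> coeff (pcompose p q) i \<in> S"
  by (rule coeff_pcompose_semiring_closed) (auto intro: subfield_zero subfield_add subfield_mult)

lemma coeff_pCons_subfield: "a \<in> S \<Longrightarrow> (\<And>i. coeff p i \<in> S) \<Longrightarrow> coeff (pCons a p) i \<in> S"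
  by (simp add: coeff_pCons split: nat.split)

end

lemma Rats_subset_subfield:
  fixes S :: "'a::field_char_0 set"
  assumes "subfield S"
  shows "\<rat> \<subseteq> S"
proof
  fix x :: 'a
  assume "x \<in> \<rat>"
  then obtain a b where "x = of_int a / of_int b"
    by (auto elim!: Rats_cases')
  then show "x \<in> S"
    using assms by (simp add: subfield_divide subfield_of_int)
qed

lemma subfield_image_of_real:
  assumes "subfield F"
  shows "subfield (of_real ` F :: 'a::real_field set)"
  using assms unfolding subfield_def
  by (auto simp flip: of_real_add of_real_mult of_real_minus of_real_inverse)

lemma subfield_generated_subfield: "subfield (generated_subfield g)"
  by (auto simp: generated_subfield_def subfield_of_real_iff subfield_def)

lemma generated_subfield_self: "g \<in> generated_subfield g"
  unfolding generated_subfield_def by auto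

lemma generated_subfield_least: "subfield F \<Longrightarrow> g \<in> F \<Longrightarrow> generated_subfield g \<subseteq> F"
  unfolding generated_subfield_def subfield_of_real_iff by auto

section \<open>Elements of a real number field are algebraic\<close>

interpretation rat_vs: vector_space "\<lambda>(q::rat) (x::real). of_rat q * x"
  by unfold_locales (auto simp: of_rat_add of_rat_mult algebra_simps)

lemma finite_over_rat_span:
  assumes "finite_over_rat K"
  obtains B where "finite B" "K = rat_vs.span B"
  using assms unfolding finite_over_rat_def by (auto simp: rat_vs.span_finite)

lemma real_number_field_subfield: "real_number_field K \<Longrightarrow> subfield K"
  by (simp add: real_number_field_def subfield_of_real_iff)

lemma algebraic_if_power_eq:
  fixes \<alpha> :: "'a::field_char_0"
  assumes "i \<noteq> j" and "\<alpha> ^ i = \<alpha> ^ j"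
  shows "algebraic \<alpha>"
proof (rule algebraicI')
  show "coeff (monom 1 i - monom 1 j) k \<in> \<rat>" for k
    by (simp add: coeff_monom)
  show "monom 1 i - monom (1::'a) j \<noteq> 0"
    using assms(1) by (metis coeff_monom diff_zero eq_iff_diff_eq_0 zero_neq_one)
  show "poly (monom 1 i - monom 1 j) \<alpha> = 0"
    using assms(2) by (simp add: poly_monom)
qed

lemma algebraic_if_powers_dependent:
  fixes \<alpha> :: real
  assumes inj: "inj_on (\<lambda>i. \<alpha> ^ i) {0..n}" and "rat_vs.dependent ((\<lambda>i. \<alpha> ^ i) ` {0..n})"
  shows "algebraic \<alpha>"
proof -
  obtain u where u: "\<exists>v\<in>(\<lambda>i. \<alpha> ^ i) ` {0..n}. u v \<noteq> 0"
    "(\<Sum>v\<in>(\<lambda>i. \<alpha> ^ i) ` {0..n}. of_rat (u v) * v) = 0"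
    using assms(2) by (auto simp: rat_vs.dependent_finite)
  define p where "p = (\<Sum>i\<in>{0..n}. monom (of_rat (u (\<alpha> ^ i)) :: real) i)"
  have coeff_p: "coeff p i = (if i \<le> n then of_rat (u (\<alpha> ^ i)) else 0)" for i
    by (simp add: p_def coeff_sum coeff_monom)
  show ?thesis
  proof (rule algebraicI')
    show "coeff p i \<in> \<rat>" for i
      by (simp add: coeff_p)
    show "p \<noteq> 0"
      using u(1) coeff_p by (metis atLeastAtMost_iff coeff_0 imageE of_rat_eq_0_iff)
    show "poly p \<alpha> = 0"
      using u(2) by (simp add: p_def poly_sum poly_monom sum.reindex[OF inj])
  qed
qed

lemma real_number_field_algebraic:
  assumes K: "real_number_field K" and "\<alpha> \<in> K"
  shows "algebraic \<alpha>"
proof -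
  obtain B where B: "finite B" "K = rat_vs.span B"
    using K finite_over_rat_span by (auto simp: real_number_field_def)
  define n where "n = card B"
  show ?thesis
  proof (cases "inj_on (\<lambda>i. \<alpha> ^ i) {0..n}")
    case False
    then show ?thesis
      unfolding inj_on_def by (metis algebraic_if_power_eq)
  next
    case inj: True
    have "(\<lambda>i. \<alpha> ^ i) ` {0..n} \<subseteq> rat_vs.span B"
      using \<open>\<alpha> \<in> K\<close> B(2) real_number_field_subfield[OF K] by (auto intro: subfield_power)
    moreover have "card ((\<lambda>i. \<alpha> ^ i) ` {0..n}) > card B"
      using card_image[OF inj] by (simp add: n_def)
    ultimately have "rat_vs.dependent ((\<lambda>i. \<alpha> ^ i) ` {0..n})"
      using rat_vs.independent_span_bound[OF B(1)] by fastforce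
    then show ?thesis
      by (rule algebraic_if_powers_dependent[OF inj])
  qed
qed

lemma real_number_field_rat_poly:
  assumes "real_number_field K" and "\<alpha> \<in> K"
  obtains p :: "complex poly"
  where "\<And>i. coeff p i \<in> \<rat>" "p \<noteq> 0" "poly p (of_real \<alpha>) = 0"
  using real_number_field_algebraic[OF assms] algebraic_of_real_iff[of \<alpha>, where 'a = complex]
  unfolding algebraic_altdef by metis

section \<open>Common roots of polynomials over a subfield\<close>

lemma poly_reduce_degree:
  fixes p r :: "'a::field poly"
  assumes S: "subfield S" and p: "\<And>i. coeff p i \<in> S" and r: "\<And>i. coeff r i \<in> S"
    and "r \<noteq> 0" and "degree r \<le> degree p"
  obtains p' where "\<And>i. coeff p' i \<in> S" "p' = 0 \<or> degree p' < degree p"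
    "\<And>z. poly r z = 0 \<Longrightarrow> poly p' z = poly p z"
proof -
  define c where "c = lead_coeff p / lead_coeff r"
  define q where "q = monom c (degree p - degree r) * r"
  have "c \<in> S"
    unfolding c_def using S p r by (rule subfield_divide)
  then have "coeff q i \<in> S" for i
    unfolding q_def using S r
    by (intro coeff_mult_subfield) (auto simp: coeff_monom intro: subfield_zero)
  then have "coeff (p - q) i \<in> S" for i
    using S p by (simp add: subfield_diff)
  moreover have "p - q = 0 \<or> degree (p - q) < degree p"
  proof (cases "p = 0")
    case False
    have deg_q: "degree q = degree p"
      using False \<open>r \<noteq> 0\<close> \<open>degree r \<le> degree p\<close>
      by (simp add: q_def c_def degree_mult_eq degree_monom_eq)
    have "coeff q (degree p) = lead_coeff p"
      using False \<open>r \<noteq> 0\<close> \<open>degree r \<le> degree p\<close>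
      by (simp add: q_def c_def coeff_monom_mult)
    then have "coeff (p - q) (degree p) = 0" "degree (p - q) \<le> degree p"
      using deg_q by (simp_all add: degree_diff_le)
    then show ?thesis
      using degree_less_if_less_eqI[of "p - q" p] by blast
  qed (simp add: q_def c_def)
  moreover have "poly (p - q) z = poly p z" if "poly r z = 0" for z
    using that by (simp add: q_def)
  ultimately show ?thesis
    using that by blast
qed

lemma exists_poly_common_roots:
  fixes p r :: "'a::field poly"
  assumes "subfield S" and "\<And>i. coeff p i \<in> S" and "\<And>i. coeff r i \<in> S" and "p \<noteq> 0 \<or> r \<noteq> 0"
  shows "\<exists>d. (\<forall>i. coeff d i \<in> S) \<and> d \<noteq> 0 \<and> (\<forall>z. poly d z = 0 \<longleftrightarrow> poly p z = 0 \<and> poly r z = 0)"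
  using assms(2-4)
proof (induction "degree p + degree r" arbitrary: p r rule: less_induct)
  case less
  consider "r = 0" | "p = 0" | "p \<noteq> 0" "r \<noteq> 0" "degree r \<le> degree p"
    | "p \<noteq> 0" "r \<noteq> 0" "degree p \<le> degree r"
    by linarith
  then show ?case
  proof cases
    case 1
    then show ?thesis using less.prems by auto
  next
    case 2
    then show ?thesis using less.prems by auto
  next
    case 3
    obtain p' where p': "\<And>i. coeff p' i \<in> S" "p' = 0 \<or> degree p' < degree p"
      "\<And>z. poly r z = 0 \<Longrightarrow> poly p' z = poly p z"
      using poly_reduce_degree[OF assms(1) less.prems(1,2) 3(2,3)] by blast
    have "\<exists>d. (\<forall>i. coeff d i \<in> S) \<and> d \<noteq> 0 \<and> (\<forall>z. poly d z = 0 \<longleftrightarrow> poly p' z = 0 \<and> poly r z = 0)"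
      using p'(1,2) less.hyps[of p' r] less.prems(2) 3(2) by (cases "p' = 0") auto
    then show ?thesis
      using p'(3) by metis
  next
    case 4
    obtain r' where r': "\<And>i. coeff r' i \<in> S" "r' = 0 \<or> degree r' < degree r"
      "\<And>z. poly p z = 0 \<Longrightarrow> poly r' z = poly r z"
      using poly_reduce_degree[OF assms(1) less.prems(2,1) 4(1,3)] by blast
    have "\<exists>d. (\<forall>i. coeff d i \<in> S) \<and> d \<noteq> 0 \<and> (\<forall>z. poly d z = 0 \<longleftrightarrow> poly p z = 0 \<and> poly r' z = 0)"
      using r'(1,2) less.hyps[of p r'] less.prems(1) 4(1) by (cases "r' = 0") auto
    then show ?thesis
      using r'(3) by metis
  qed
qed

lemma coeff_linear_power_subleading:
  fixes a :: "'a::comm_ring_1"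
  shows "coeff ([:a, 1:] ^ Suc n) n = of_nat (Suc n) * a"
proof (induction n)
  case (Suc n)
  have "[:a, 1:] ^ Suc (Suc n) = smult a ([:a, 1:] ^ Suc n) + pCons 0 ([:a, 1:] ^ Suc n)"
    by (subst power_Suc) (simp add: mult_pCons_left del: power_Suc)
  then have "coeff ([:a, 1:] ^ Suc (Suc n)) (Suc n) =
      a * coeff ([:a, 1:] ^ Suc n) (Suc n) + coeff ([:a, 1:] ^ Suc n) n"
    by (simp del: power_Suc)
  also have "\<dots> = of_nat (Suc (Suc n)) * a"
    by (simp only: Suc.IH coeff_linear_power) (simp add: algebra_simps)
  finally show ?case .
qed simp

lemma poly_single_root_eq:
  fixes d :: "complex poly"
  assumes "d \<noteq> 0" and "{z. poly d z = 0} = {\<beta>}"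
  obtains c m where "c \<noteq> 0" "d = smult c ([:-\<beta>, 1:] ^ Suc m)"
proof -
  obtain q where q: "d = [:-\<beta>, 1:] ^ order \<beta> d * q" "\<not> [:-\<beta>, 1:] dvd q"
    using order_decomp[OF assms(1)] by blast
  have "poly q z \<noteq> 0" for z
  proof
    assume "poly q z = 0"
    then have "poly d z = 0"
      by (subst q(1)) simp
    then have "z = \<beta>"
      using assms(2) by auto
    with \<open>poly q z = 0\<close> q(2) show False
      by (simp add: poly_eq_0_iff_dvd)
  qed
  then obtain c where c: "c \<noteq> 0" "q = [:c:]"
    using fundamental_theorem_of_algebra_alt[of q] by auto
  have "order \<beta> d \<noteq> 0"
    using assms by (auto simp: order_root)
  then obtain m where "order \<beta> d = Suc m"
    using not0_implies_Suc by blast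
  then show ?thesis
    using that c q(1) by (simp add: mult.commute del: power_Suc)
qed

lemma unique_common_root_in_subfield:
  fixes p r :: "complex poly"
  assumes S: "subfield S" and "\<And>i. coeff p i \<in> S" and "\<And>i. coeff r i \<in> S" and "p \<noteq> 0"
    and roots: "{z. poly p z = 0 \<and> poly r z = 0} = {\<beta>}"
  shows "\<beta> \<in> S"
proof -
  obtain d where d: "\<And>i. coeff d i \<in> S" "d \<noteq> 0" "\<And>z. poly d z = 0 \<longleftrightarrow> poly p z = 0 \<and> poly r z = 0"
    using exists_poly_common_roots[OF assms(1-3)] \<open>p \<noteq> 0\<close> by blast
  then have "{z. poly d z = 0} = {\<beta>}"
    using roots by simp
  then obtain c m where c: "c \<noteq> 0" "d = smult c ([:-\<beta>, 1:] ^ Suc m)"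
    using poly_single_root_eq[OF d(2)] by blast
  have "coeff d (Suc m) = c" "coeff d m = - c * of_nat (Suc m) * \<beta>"
    by (simp_all add: c(2) coeff_linear_power coeff_linear_power_subleading del: power_Suc)
  then have "\<beta> = - coeff d m / (of_nat (Suc m) * coeff d (Suc m))"
    using c(1) by (simp del: of_nat_Suc)
  moreover have "- coeff d m / (of_nat (Suc m) * coeff d (Suc m)) \<in> S"
    by (intro subfield_divide[OF S] subfield_mult[OF S] subfield_uminus[OF S] subfield_of_nat[OF S] d(1))
  ultimately show ?thesis
    by simp
qed

section \<open>Primitive elements\<close>

lemma Rats_avoid_finite:
  assumes "finite (E :: complex set)"
  obtains r :: real where "r \<in> \<rat>" "of_real r \<notin> E"
proof -
  have "infinite (complex_of_real ` \<rat>)"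
    using Rats_infinite finite_imageD[of complex_of_real \<rat>] by (auto simp: inj_on_def)
  then have "\<not> complex_of_real ` \<rat> \<subseteq> E"
    using assms finite_subset by blast
  then show ?thesis
    using that by blast
qed

lemma rat_separates_common_root_linear:
  fixes f h :: "complex poly" and \<alpha> \<beta> :: complex
  assumes "f \<noteq> 0" and "h \<noteq> 0"
  obtains r :: real where "r \<in> \<rat>"
    "\<And>z. poly h z = 0 \<Longrightarrow> poly f (\<alpha> + of_real r * (\<beta> - z)) = 0 \<Longrightarrow> z = \<beta>"
proof -
  define E where "E = (\<lambda>(x, y). (x - \<alpha>) / (\<beta> - y)) ` ({x. poly f x = 0} \<times> {y. poly h y = 0})"
  have "finite E"
    unfolding E_def using poly_roots_finite assms by auto
  then obtain r where r: "r \<in> \<rat>" "of_real r \<notin> E"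
    using Rats_avoid_finite by blast
  have "z = \<beta>" if "poly h z = 0" "poly f (\<alpha> + of_real r * (\<beta> - z)) = 0" for z
  proof (rule ccontr)
    assume "z \<noteq> \<beta>"
    then have "of_real r = (\<alpha> + of_real r * (\<beta> - z) - \<alpha>) / (\<beta> - z)"
      by simp
    also have "\<dots> \<in> E"
      unfolding E_def using that by force
    finally show False
      using r(2) by blast
  qed
  then show ?thesis
    using that r(1) by blast
qed

lemma real_number_field_generates_pair:
  assumes K: "real_number_field K" and "\<alpha> \<in> K" and "\<beta> \<in> K"
  shows "\<exists>\<gamma>\<in>K. \<alpha> \<in> generated_subfield \<gamma> \<and> \<beta> \<in> generated_subfield \<gamma>"
proof -
  obtain f :: "complex poly" where f: "\<And>i. coeff f i \<in> \<rat>" "f \<noteq> 0" "poly f (of_real \<alpha>) = 0"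
    using real_number_field_rat_poly[OF K \<open>\<alpha> \<in> K\<close>] by blast
  obtain h :: "complex poly" where h: "\<And>i. coeff h i \<in> \<rat>" "h \<noteq> 0" "poly h (of_real \<beta>) = 0"
    using real_number_field_rat_poly[OF K \<open>\<beta> \<in> K\<close>] by blast
  obtain r where r: "r \<in> \<rat>"
    "\<And>z. poly h z = 0 \<Longrightarrow> poly f (of_real \<alpha> + of_real r * (of_real \<beta> - z)) = 0 \<Longrightarrow> z = of_real \<beta>"
    using rat_separates_common_root_linear[OF f(2) h(2)] by blast
  define \<gamma> where "\<gamma> = \<alpha> + r * \<beta>"
  define F where "F = generated_subfield \<gamma>"
  define S :: "complex set" where "S = of_real ` F"
  have SF: "subfield F" and S: "subfield S"
    by (simp_all add: F_def S_def subfield_generated_subfield subfield_image_of_real)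
  have "\<gamma> \<in> F" "r \<in> F"
    using Rats_subset_subfield[OF SF] r(1) by (auto simp: F_def generated_subfield_self)
  define k where "k = pcompose f [:of_real \<gamma>, - of_real r:]"
  have poly_k: "poly k z = poly f (of_real \<alpha> + of_real r * (of_real \<beta> - z))" for z
    by (simp add: k_def poly_pcompose \<gamma>_def algebra_simps)
  have "of_real \<gamma> \<in> S" "of_real r \<in> S"
    using \<open>\<gamma> \<in> F\<close> \<open>r \<in> F\<close> by (simp_all add: S_def)
  then have "coeff k i \<in> S" for i
    unfolding k_def using Rats_subset_subfield[OF S] f(1)
    by (intro coeff_pcompose_subfield[OF S])
      (auto simp: subfield_zero[OF S] intro!: coeff_pCons_subfield[OF S] subfield_uminus[OF S])
  moreover have "coeff h i \<in> S" for i
    using Rats_subset_subfield[OF S] h(1) by blast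
  moreover have "{z. poly h z = 0 \<and> poly k z = 0} = {of_real \<beta>}"
    using h(3) f(3) r(2) by (auto simp: poly_k)
  ultimately have "of_real \<beta> \<in> S"
    using unique_common_root_in_subfield[OF S] h(2) by blast
  then have "\<beta> \<in> F"
    by (auto simp: S_def)
  moreover have "\<alpha> \<in> F"
    using subfield_diff[OF SF \<open>\<gamma> \<in> F\<close> subfield_mult[OF SF \<open>r \<in> F\<close> \<open>\<beta> \<in> F\<close>]] by (simp add: \<gamma>_def)
  moreover have "\<gamma> \<in> K"
    unfolding \<gamma>_def using real_number_field_subfield[OF K] r(1) \<open>\<alpha> \<in> K\<close> \<open>\<beta> \<in> K\<close>
    by (auto intro: subfield_add subfield_mult Rats_subset_subfield[THEN subsetD])
  ultimately show ?thesis
    unfolding F_def by blast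
qed

lemma real_number_field_primitive_element:
  assumes K: "real_number_field K"
  obtains \<delta> where "\<delta> \<in> K" "generated_subfield \<delta> = K"
proof -
  have SK: "subfield K"
    using K by (rule real_number_field_subfield)
  obtain B where B: "finite B" "B \<subseteq> K" "K = {\<Sum>b\<in>B. of_rat (c b) * b | c :: real \<Rightarrow> rat. True}"
    using K unfolding real_number_field_def finite_over_rat_def by blast
  have "\<exists>\<delta>\<in>K. A \<subseteq> generated_subfield \<delta>" if "finite A" "A \<subseteq> K" for A
    using that
  proof (induction A rule: finite_induct)
    case empty
    then show ?case
      using subfield_zero[OF SK] by blast
  next
    case (insert x A)
    then obtain \<delta> where "\<delta> \<in> K" "A \<subseteq> generated_subfield \<delta>"
      by auto
    moreover obtain \<gamma> where "\<gamma> \<in> K" "\<delta> \<in> generated_subfield \<gamma>" "x \<in> generated_subfield \<gamma>"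
      using real_number_field_generates_pair[OF K \<open>\<delta> \<in> K\<close>, of x] insert.prems by auto
    moreover have "generated_subfield \<delta> \<subseteq> generated_subfield \<gamma>"
      using generated_subfield_least[OF subfield_generated_subfield \<open>\<delta> \<in> generated_subfield \<gamma>\<close>] .
    ultimately show ?case
      by blast
  qed
  then obtain \<delta> where \<delta>: "\<delta> \<in> K" "B \<subseteq> generated_subfield \<delta>"
    using B(1,2) by blast
  have S: "subfield (generated_subfield \<delta>)"
    by (rule subfield_generated_subfield)
  have "K \<subseteq> generated_subfield \<delta>"
    unfolding B(3) using \<delta>(2) Rats_subset_subfield[OF S]
    by (auto intro!: subfield_sum[OF S] subfield_mult[OF S])
  moreover have "generated_subfield \<delta> \<subseteq> K"
    using generated_subfield_least[OF SK \<delta>(1)] .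
  ultimately show ?thesis
    using that \<delta>(1) by blast
qed

lemma rat_separates_common_root_square:
  fixes f h :: "complex poly" and a \<delta> :: complex
  assumes "f \<noteq> 0" and "h \<noteq> 0" and "a \<noteq> 0"
  obtains r :: real where "r \<in> \<rat>" "\<delta> + of_real r \<noteq> 0"
    "\<And>z. poly h (z - of_real r) = 0 \<Longrightarrow> poly f (a * z\<^sup>2 / (\<delta> + of_real r)\<^sup>2) = 0 \<Longrightarrow>
      z = \<delta> + of_real r"
proof -
  \<comment> \<open>A second common root \<open>z\<close> forces \<open>r\<close> to be a root of \<open>P (a z\<^sup>2 / (\<delta> + r)\<^sup>2, z - r)\<close>.\<close>
  define P :: "complex \<times> complex \<Rightarrow> complex poly" where
    "P = (\<lambda>(\<alpha>, b). smult a ([:b, 1:]\<^sup>2) - smult \<alpha> ([:\<delta>, 1:]\<^sup>2))"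
  have poly_P: "poly (P (\<alpha>, b)) x = a * (b + x)\<^sup>2 - \<alpha> * (\<delta> + x)\<^sup>2" for \<alpha> b x
    by (simp add: P_def power2_eq_square algebra_simps)
  define R where "R = {(\<alpha>, b). poly f \<alpha> = 0 \<and> poly h b = 0 \<and> b \<noteq> \<delta>}"
  define E where "E = insert (- \<delta>) (\<Union>\<alpha>b\<in>R. {x. poly (P \<alpha>b) x = 0})"
  have "finite R"
    by (rule finite_subset[of _ "{\<alpha>. poly f \<alpha> = 0} \<times> {b. poly h b = 0}"])
      (use assms poly_roots_finite in \<open>auto simp: R_def\<close>)
  moreover have "P \<alpha>b \<noteq> 0" if "\<alpha>b \<in> R" for \<alpha>b
  proof -
    obtain \<alpha> b where "\<alpha>b = (\<alpha>, b)" "b \<noteq> \<delta>"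
      using \<open>\<alpha>b \<in> R\<close> by (auto simp: R_def)
    then have "poly (P \<alpha>b) (- \<delta>) \<noteq> 0"
      using \<open>a \<noteq> 0\<close> by (simp add: poly_P)
    then show ?thesis
      by auto
  qed
  ultimately have "finite E"
    unfolding E_def by (auto intro: poly_roots_finite)
  then obtain r where r: "r \<in> \<rat>" "of_real r \<notin> E"
    using Rats_avoid_finite by blast
  have "\<delta> + of_real r \<noteq> 0"
    using r(2) by (auto simp: E_def eq_neg_iff_add_eq_0 add.commute)
  moreover have "z = \<delta> + of_real r"
    if "poly h (z - of_real r) = 0" "poly f (a * z\<^sup>2 / (\<delta> + of_real r)\<^sup>2) = 0" for z
  proof (rule ccontr)
    assume "z \<noteq> \<delta> + of_real r"
    then have "(a * z\<^sup>2 / (\<delta> + of_real r)\<^sup>2, z - of_real r) \<in> R"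
      using that by (auto simp: R_def)
    moreover have "poly (P (a * z\<^sup>2 / (\<delta> + of_real r)\<^sup>2, z - of_real r)) (of_real r) = 0"
      using \<open>\<delta> + of_real r \<noteq> 0\<close> by (simp add: poly_P)
    ultimately show False
      using r(2) by (auto simp: E_def)
  qed
  ultimately show ?thesis
    using that r(1) by blast
qed

lemma real_number_field_rat_shift_in_square_quotient_subfield:
  assumes K: "real_number_field K" and "a \<in> K" and "\<delta> \<in> K" and "a \<noteq> 0"
  obtains r where "r \<in> \<rat>" "\<delta> + r \<in> generated_subfield ((\<delta> + r)\<^sup>2 / a)"
proof -
  obtain f :: "complex poly" where f: "\<And>i. coeff f i \<in> \<rat>" "f \<noteq> 0" "poly f (of_real a) = 0"
    using real_number_field_rat_poly[OF K \<open>a \<in> K\<close>] by blast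
  obtain h :: "complex poly" where h: "\<And>i. coeff h i \<in> \<rat>" "h \<noteq> 0" "poly h (of_real \<delta>) = 0"
    using real_number_field_rat_poly[OF K \<open>\<delta> \<in> K\<close>] by blast
  obtain r where r: "r \<in> \<rat>" "of_real \<delta> + of_real r \<noteq> (0::complex)"
    "\<And>z. poly h (z - of_real r) = 0 \<Longrightarrow> poly f (of_real a * z\<^sup>2 / (of_real \<delta> + of_real r)\<^sup>2) = 0 \<Longrightarrow>
      z = of_real \<delta> + of_real r"
    using rat_separates_common_root_square[OF f(2) h(2), where a = "of_real a" and \<delta> = "of_real \<delta>"]
      \<open>a \<noteq> 0\<close> by auto
  define \<theta> where "\<theta> = \<delta> + r"
  define F where "F = generated_subfield (\<theta>\<^sup>2 / a)"
  define S :: "complex set" where "S = of_real ` F"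
  have SF: "subfield F" and S: "subfield S"
    by (simp_all add: F_def S_def subfield_generated_subfield subfield_image_of_real)
  have "a / \<theta>\<^sup>2 \<in> F"
    using subfield_inverse[OF SF generated_subfield_self[of "\<theta>\<^sup>2 / a", folded F_def]] by simp
  then have "of_real (a / \<theta>\<^sup>2) \<in> S" "of_real r \<in> S"
    using Rats_subset_subfield[OF SF] r(1) unfolding S_def by blast+
  define h' where "h' = pcompose h [:- of_real r, 1:]"
  define k where "k = pcompose f [:0, 0, of_real (a / \<theta>\<^sup>2):]"
  have "coeff h' i \<in> S" "coeff k i \<in> S" for i
    unfolding h'_def k_def using \<open>of_real r \<in> S\<close> \<open>of_real (a / \<theta>\<^sup>2) \<in> S\<close>
      Rats_subset_subfield[OF S] h(1) f(1)
    by (auto simp: subfield_zero[OF S] subfield_one[OF S]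
        intro!: coeff_pcompose_subfield[OF S] coeff_pCons_subfield[OF S] subfield_uminus[OF S])
  moreover have "h' \<noteq> 0"
    using h(2) by (auto simp: h'_def pcompose_eq_0_iff)
  moreover have "{z. poly h' z = 0 \<and> poly k z = 0} = {of_real \<theta>}"
  proof -
    have "poly h' z = poly h (z - of_real r)" for z
      by (simp add: h'_def poly_pcompose)
    moreover have "poly k z = poly f (of_real a * z\<^sup>2 / (of_real \<delta> + of_real r)\<^sup>2)" for z
      by (simp add: k_def poly_pcompose \<theta>_def power2_eq_square field_simps)
    moreover have "of_real \<theta> = (of_real \<delta> + of_real r :: complex)"
      by (simp add: \<theta>_def)
    ultimately show ?thesis
      using r(2,3) h(3) f(3) by auto
  qed
  ultimately have "of_real \<theta> \<in> S"
    using unique_common_root_in_subfield[OF S] by blast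
  then have "\<theta> \<in> F"
    by (auto simp: S_def)
  then show ?thesis
    using that r(1) by (simp add: F_def \<theta>_def)
qed

lemma real_number_field_generated_by_square_quotient:
  assumes K: "real_number_field K" and "a \<in> K" and "a \<noteq> 0"
  obtains \<theta> where "\<theta> \<in> K" "generated_subfield (\<theta>\<^sup>2 / a) = K"
proof -
  have SK: "subfield K"
    using K by (rule real_number_field_subfield)
  obtain \<delta> where \<delta>: "\<delta> \<in> K" "generated_subfield \<delta> = K"
    using real_number_field_primitive_element[OF K] by blast
  obtain r where r: "r \<in> \<rat>" "\<delta> + r \<in> generated_subfield ((\<delta> + r)\<^sup>2 / a)"
    using real_number_field_rat_shift_in_square_quotient_subfield[OF K \<open>a \<in> K\<close> \<delta>(1) \<open>a \<noteq> 0\<close>] .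
  define \<theta> where "\<theta> = \<delta> + r"
  define F where "F = generated_subfield (\<theta>\<^sup>2 / a)"
  have SF: "subfield F"
    by (simp add: F_def subfield_generated_subfield)
  have "\<theta> \<in> K"
    unfolding \<theta>_def using SK Rats_subset_subfield[OF SK] r(1) \<delta>(1) by (blast intro: subfield_add)
  have "\<theta> \<in> F" "r \<in> F"
    using r Rats_subset_subfield[OF SF] by (auto simp: F_def \<theta>_def)
  then have "\<delta> \<in> F"
    using subfield_diff[OF SF] by (fastforce simp: \<theta>_def)
  then have "K \<subseteq> F"
    using generated_subfield_least[OF SF] \<delta>(2) by blast
  moreover have "F \<subseteq> K"
    unfolding F_def using generated_subfield_least[OF SK] \<open>\<theta> \<in> K\<close> \<open>a \<in> K\<close>
    by (simp add: subfield_divide[OF SK] subfield_power[OF SK])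
  ultimately show ?thesis
    using that \<open>\<theta> \<in> K\<close> unfolding F_def by blast
qed

theorem lemma3p4:
  fixes K :: "real set" and a' b' :: real
  assumes "real_number_field K"
    and "a' \<in> K" and "b' \<in> K" and "a' \<noteq> 0" and "b' \<noteq> 0"
  shows "\<exists>g' x y z. g' \<in> K \<and> generated_subfield g' = K \<and>
           x \<in> K \<and> y \<in> K \<and> z \<in> K \<and>
           a' * x\<^sup>2 + b' * y\<^sup>2 - a' * b' * z\<^sup>2 = g'"
proof -
  have SK: "subfield K"
    using assms(1) by (rule real_number_field_subfield)
  obtain \<theta> where "\<theta> \<in> K" and gen: "generated_subfield (\<theta>\<^sup>2 / a') = K"
    using real_number_field_generated_by_square_quotient[OF assms(1,2,4)] by blast
  then have "\<theta>\<^sup>2 / a' \<in> K" "\<theta> / a' \<in> K"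
    using SK \<open>a' \<in> K\<close> by (simp_all add: subfield_divide subfield_power)
  moreover have "a' * (\<theta> / a')\<^sup>2 + b' * 0\<^sup>2 - a' * b' * 0\<^sup>2 = \<theta>\<^sup>2 / a'"
    using \<open>a' \<noteq> 0\<close> by (simp add: power2_eq_square)
  ultimately show ?thesis
    using gen subfield_zero[OF SK] by blast
qed

end
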